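(* Let $\mathit{GF}(q)$ be a finite field with $q=p^n$, $p$ prime. If $F_{q,\phi}$ and $F_{q,\phi}^{\dagger}$ can be performed for some nonzero $\mathit{GF}(p)$-linear map $\phi:\mathit{GF}(q)\to\mathit{GF}(p)$, then there is a quantum algorithm making a single query to the black box that solves the quantum hidden linear structure problem over $\mathit{GF}(q)$ exactly (i.e. outputs $s$ with probability $1$).
   Context: $F_{q,\phi}$ is the unitary on the space with orthonormal basis $\{\ket{x}:x\in\mathit{GF}(q)\}$ defined by $F_{q,\phi}\ket{x}=\frac{1}{\sqrt q}\sum_{y\in \mathit{GF}(q)}\omega^{\phi(xy)}\ket{y}$, $\omega=e^{2\pi i/p}$ (elements of $\mathit{GF}(p)$ in the exponent identified with integers $0,\dots,p-1$; $\mathit{GF}(q)$ viewed as an $n$-dimensional vector space over $\mathit{GF}(p)$). The quantum hidden linear structure problem over $\mathit{GF}(q)$: one is given a black box performing the unitary $\ket{x}\ket{y}\mapsto\ket{x}\ket{\pi(y+sx)}$ on two $\mathit{GF}(q)$-valued registers, where $\pi$ is an unknown permutation of $\mathit{GF}(q)$ and $s\in\mathit{GF}(q)$ is unknown; the goal is to determine $s$. *)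

theory Defs
  imports "HOL-Analysis.Analysis"
begin

text \<open>GF(q) is modelled by an arbitrary finite field type 'a; its characteristic
  p = CHAR('a) is prime and q = CARD('a) = p^n automatically.
  GF(p) is the prime subfield of 'a.\<close>

definition prime_subfield :: "'a::field set" where
  "prime_subfield = range of_nat"

text \<open>Identification of an element of GF(p) with an integer in 0..p-1.\<close>
definition gfp_val :: "'a::field \<Rightarrow> nat" where
  "gfp_val c = (LEAST k. of_nat k = c)"

definition gfp_linear_functional :: "('a::field \<Rightarrow> 'a) \<Rightarrow> bool" where
  "gfp_linear_functional \<phi> \<longleftrightarrow>
     (\<forall>x. \<phi> x \<in> prime_subfield) \<and>
     (\<forall>x y. \<phi> (x + y) = \<phi> x + \<phi> y) \<and>
     (\<forall>c\<in>prime_subfield. \<forall>x. \<phi> (c * x) = c * \<phi> x)"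

definition omega_pow :: "'a::field itself \<Rightarrow> nat \<Rightarrow> complex" where
  "omega_pow _ k = cis (2 * pi * real k / real CHAR('a))"

text \<open>Matrix entry <y| F_{q,phi} |x> = omega^{phi(xy)} / sqrt q.\<close>
definition F_entry :: "('a::{finite,field} \<Rightarrow> 'a) \<Rightarrow> 'a \<Rightarrow> 'a \<Rightarrow> complex" where
  "F_entry \<phi> y x = omega_pow TYPE('a) (gfp_val (\<phi> (x * y))) / complex_of_real (sqrt (real CARD('a)))"

text \<open>Two-register states: amplitude functions on GF(q) x GF(q).\<close>
type_synonym 'a state = "'a \<times> 'a \<Rightarrow> complex"

definition basis_state :: "'a \<times> 'a \<Rightarrow> 'a state" where
  "basis_state z = (\<lambda>w. if w = z then 1 else 0)"

text \<open>Gates available to the algorithm: F_{q,phi} and its adjoint on either register,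
  and classical reversible gates (permutations of the computational basis).\<close>
datatype 'a gate = F_reg1 | Fdag_reg1 | F_reg2 | Fdag_reg2 | Perm "'a \<times> 'a \<Rightarrow> 'a \<times> 'a"

definition apply_perm :: "('a \<times> 'a \<Rightarrow> 'a \<times> 'a) \<Rightarrow> 'a state \<Rightarrow> 'a state" where
  "apply_perm g v = (\<lambda>z. v (inv g z))"

fun apply_gate :: "('a::{finite,field} \<Rightarrow> 'a) \<Rightarrow> 'a gate \<Rightarrow> 'a state \<Rightarrow> 'a state" where
  "apply_gate \<phi> F_reg1 v = (\<lambda>(a, b). \<Sum>x\<in>UNIV. F_entry \<phi> a x * v (x, b))"
| "apply_gate \<phi> Fdag_reg1 v = (\<lambda>(a, b). \<Sum>x\<in>UNIV. cnj (F_entry \<phi> x a) * v (x, b))"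
| "apply_gate \<phi> F_reg2 v = (\<lambda>(a, b). \<Sum>y\<in>UNIV. F_entry \<phi> b y * v (a, y))"
| "apply_gate \<phi> Fdag_reg2 v = (\<lambda>(a, b). \<Sum>y\<in>UNIV. cnj (F_entry \<phi> y b) * v (a, y))"
| "apply_gate \<phi> (Perm g) v = apply_perm g v"

definition run_circuit :: "('a::{finite,field} \<Rightarrow> 'a) \<Rightarrow> 'a gate list \<Rightarrow> 'a state \<Rightarrow> 'a state" where
  "run_circuit \<phi> gs v = fold (apply_gate \<phi>) gs v"

definition valid_gate :: "'a gate \<Rightarrow> bool" where
  "valid_gate g = (case g of Perm f \<Rightarrow> bij f | _ \<Rightarrow> True)"

definition black_box :: "('a::field \<Rightarrow> 'a) \<Rightarrow> 'a \<Rightarrow> 'a state \<Rightarrow> 'a state" where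
  "black_box \<pi> s = apply_perm (\<lambda>(x, y). (x, \<pi> (y + s * x)))"

text \<open>A single-query algorithm: start in a computational basis state, apply a circuit,
  query the black box once, apply another circuit, measure both registers in the
  computational basis and classically post-process the outcome.\<close>
definition solves_HLS_exactly_one_query ::
  "('a::{finite,field} \<Rightarrow> 'a) \<Rightarrow> 'a \<times> 'a \<Rightarrow> 'a gate list \<Rightarrow> 'a gate list \<Rightarrow> ('a \<times> 'a \<Rightarrow> 'a) \<Rightarrow> bool" where
  "solves_HLS_exactly_one_query \<phi> init pre post out \<longleftrightarrow>
     (\<forall>g\<in>set pre \<union> set post. valid_gate g) \<and>
     (\<forall>\<pi> s. bij \<pi> \<longrightarrow>
        (let final = run_circuit \<phi> post (black_box \<pi> s (run_circuit \<phi> pre (basis_state init)))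
         in (\<Sum>z\<in>{z. out z = s}. (cmod (final z))\<^sup>2) = 1))"

end

theory Submission
  imports Defs "HOL-Number_Theory.Cong"
begin

text \<open>Starting from \<open>|0\<rangle>|1\<rangle>\<close>, the gates \<open>F\<close> on the first register and
  \<open>F\<^sup>\<dagger>\<close> on the second prepare, up to normalisation,
  \<open>(\<Sum>x. |x\<rangle>) \<otimes> (\<Sum>y. \<omega>^(-\<phi> y) |y\<rangle>)\<close>.  The second factor is an eigenvector of
  every translation \<open>y \<mapsto> y + t\<close>, with eigenvalue \<open>\<omega>^(\<phi> t)\<close>, so the query, which
  translates by \<open>s x\<close> and then merely relabels by \<open>\<pi>\<close>, kicks the phase \<open>\<omega>^(\<phi> (s x))\<close>
  back onto the first register.  Now \<open>F\<^sup>\<dagger>\<close> maps \<open>\<Sum>x. \<omega>^(\<phi> (s x)) |x\<rangle>\<close> to a multiple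
  of \<open>|s\<rangle>\<close>, because the character sum \<open>\<Sum>x. \<omega>^(\<phi> (c x))\<close> vanishes for \<open>c \<noteq> 0\<close>
  when \<open>\<phi> \<noteq> 0\<close>.  Measuring the first register therefore yields \<open>s\<close> with certainty.\<close>

text \<open>\<open>omega_exp c = \<omega>\<^sup>c\<close> for \<open>c\<close> in the prime subfield; junk elsewhere.\<close>
definition omega_exp :: "'a::{finite,field} \<Rightarrow> complex" where
  "omega_exp c = omega_pow TYPE('a) (gfp_val c)"

lemma omega_pow_eq_iff:
  "omega_pow TYPE('a::{finite,field}) j = omega_pow TYPE('a) k \<longleftrightarrow> j mod CHAR('a) = k mod CHAR('a)"
proof -
  have "CHAR('a) \<ge> 1"
    using finite_imp_CHAR_pos[where 'a='a] by simp
  then show ?thesis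
    using complex_root_unity_eq[of "CHAR('a)" j k]
    by (simp add: omega_pow_def cis_conv_exp mult_ac)
qed

lemma omega_pow_add:
  "omega_pow TYPE('a::{finite,field}) (j + k) = omega_pow TYPE('a) j * omega_pow TYPE('a) k"
  by (simp add: omega_pow_def cis_mult add_divide_distrib distrib_left)

lemma gfp_val_of_nat: "gfp_val (of_nat k :: 'a::{finite,field}) = k mod CHAR('a)"
  unfolding gfp_val_def
proof (rule Least_equality)
  show "of_nat (k mod CHAR('a)) = (of_nat k :: 'a)"
    by (simp add: of_nat_eq_iff_cong_CHAR cong_def)
next
  fix j assume "of_nat j = (of_nat k :: 'a)"
  then have "j mod CHAR('a) = k mod CHAR('a)"
    by (simp add: of_nat_eq_iff_cong_CHAR cong_def)
  then show "k mod CHAR('a) \<le> j"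
    by (metis mod_less_eq_dividend)
qed

lemma omega_exp_of_nat: "omega_exp (of_nat k :: 'a::{finite,field}) = omega_pow TYPE('a) k"
  by (simp add: omega_exp_def gfp_val_of_nat omega_pow_eq_iff)

lemma omega_exp_add:
  fixes c d :: "'a::{finite,field}"
  assumes "c \<in> prime_subfield" and "d \<in> prime_subfield"
  shows "omega_exp (c + d) = omega_exp c * omega_exp d"
  using assms unfolding prime_subfield_def
  by (auto simp: omega_exp_of_nat omega_pow_add simp flip: of_nat_add)

lemma norm_omega_exp [simp]: "norm (omega_exp c) = 1"
  by (simp add: omega_exp_def omega_pow_def)

lemma omega_exp_zero [simp]: "omega_exp 0 = 1"
  using omega_exp_of_nat[of 0] by (simp add: omega_pow_def)

lemma omega_exp_eq_1_iff:
  fixes c :: "'a::{finite,field}"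
  assumes "c \<in> prime_subfield"
  shows "omega_exp c = 1 \<longleftrightarrow> c = 0"
proof -
  obtain k where c: "c = of_nat k"
    using assms unfolding prime_subfield_def by auto
  have "omega_exp c = 1 \<longleftrightarrow> omega_pow TYPE('a) k = omega_pow TYPE('a) 0"
    by (simp add: c omega_exp_of_nat omega_pow_def)
  also have "\<dots> \<longleftrightarrow> c = 0"
    by (simp add: omega_pow_eq_iff c of_nat_eq_0_iff_char_dvd mod_eq_0_iff_dvd)
  finally show ?thesis .
qed

lemma of_real_sqrt_card_squared:
  "complex_of_real (sqrt (real CARD('a::finite))) * complex_of_real (sqrt (real CARD('a)))
     = of_nat CARD('a)"
  by (simp flip: of_real_mult)

lemma F_entry_omega_exp:
  fixes \<phi> :: "'a::{finite,field} \<Rightarrow> 'a"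
  shows "F_entry \<phi> y x = omega_exp (\<phi> (x * y)) / complex_of_real (sqrt (real CARD('a)))"
  by (simp add: F_entry_def omega_exp_def)

lemma black_box_apply:
  fixes \<pi> :: "'a::field \<Rightarrow> 'a"
  assumes "bij \<pi>"
  shows "black_box \<pi> s v (a, b) = v (a, inv \<pi> b - s * a)"
proof -
  let ?g = "\<lambda>(x, y). (x, \<pi> (y + s * x))"
  have "inj ?g"
    by (auto intro!: injI dest: injD[OF bij_is_inj[OF assms]])
  moreover have "?g (a, inv \<pi> b - s * a) = (a, b)"
    using assms by (simp add: bij_is_surj surj_f_inv_f)
  ultimately have "inv ?g (a, b) = (a, inv \<pi> b - s * a)"
    by (rule inv_f_eq)
  then show ?thesis
    by (simp add: black_box_def apply_perm_def)
qed

locale gfp_functional =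
  fixes \<phi> :: "'a::{finite,field} \<Rightarrow> 'a"
  assumes linear: "gfp_linear_functional \<phi>"
begin

lemma phi_in_prime_subfield: "\<phi> x \<in> prime_subfield"
  using linear by (simp add: gfp_linear_functional_def)

lemma phi_add: "\<phi> (x + y) = \<phi> x + \<phi> y"
  using linear by (simp add: gfp_linear_functional_def)

lemma phi_zero [simp]: "\<phi> 0 = 0"
  using phi_add[of 0 0] by (metis add_cancel_right_right add_0)

lemma omega_exp_add: "omega_exp (\<phi> (x + y)) = omega_exp (\<phi> x) * omega_exp (\<phi> y)"
  by (simp add: phi_add omega_exp_add phi_in_prime_subfield)

lemma omega_exp_diff: "omega_exp (\<phi> (x - y)) = omega_exp (\<phi> x) * cnj (omega_exp (\<phi> y))"
proof -
  have unit: "omega_exp (\<phi> y) * cnj (omega_exp (\<phi> y)) = 1"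
    by (simp flip: complex_norm_square)
  have "omega_exp (\<phi> x) = omega_exp (\<phi> (x - y)) * omega_exp (\<phi> y)"
    using omega_exp_add[of "x - y" y] by simp
  then show ?thesis
    by (metis unit mult.assoc mult_1_right)
qed

lemma sum_omega_exp_mult:
  assumes nonzero: "\<exists>x. \<phi> x \<noteq> 0"
  shows "(\<Sum>x\<in>UNIV. omega_exp (\<phi> (c * x))) = (if c = 0 then of_nat CARD('a) else 0)"
proof (cases "c = 0")
  case False
  obtain x0 where x0: "\<phi> x0 \<noteq> 0"
    using nonzero by blast
  let ?S = "\<Sum>x\<in>UNIV. omega_exp (\<phi> (c * x))"
  have "?S = (\<Sum>x\<in>UNIV. omega_exp (\<phi> (c * (x + x0 / c))))"
    by (rule sum.reindex_bij_witness[of _ "\<lambda>x. x + x0 / c" "\<lambda>x. x - x0 / c"]) auto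
  also have "\<dots> = ?S * omega_exp (\<phi> x0)"
    using False by (simp add: distrib_left omega_exp_add sum_distrib_right)
  finally have "?S * (omega_exp (\<phi> x0) - 1) = 0"
    by (simp add: algebra_simps)
  moreover have "omega_exp (\<phi> x0) \<noteq> 1"
    using x0 by (simp add: omega_exp_eq_1_iff phi_in_prime_subfield)
  ultimately show ?thesis
    using False by simp
qed simp

abbreviation prepared_state :: "'a state" where
  "prepared_state \<equiv> run_circuit \<phi> [F_reg1, Fdag_reg2] (basis_state (0, 1))"

abbreviation final_state :: "('a \<Rightarrow> 'a) \<Rightarrow> 'a \<Rightarrow> 'a state" where
  "final_state \<pi> s \<equiv> run_circuit \<phi> [Fdag_reg1] (black_box \<pi> s prepared_state)"

lemma prepared_state_eq: "prepared_state (a, b) = cnj (omega_exp (\<phi> b)) / of_nat CARD('a)"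
proof -
  let ?r = "complex_of_real (sqrt (real CARD('a)))"
  have reg1: "apply_gate \<phi> F_reg1 (basis_state (0, 1)) = (\<lambda>(x, y). if y = 1 then 1 / ?r else 0)"
    by (simp add: fun_eq_iff basis_state_def F_entry_omega_exp if_distrib[of "(*) _"] sum.delta
        cong: if_cong)
  have "prepared_state (a, b) = (\<Sum>y\<in>UNIV. cnj (F_entry \<phi> y b) * (if y = 1 then 1 / ?r else 0))"
    by (simp add: run_circuit_def reg1 del: apply_gate.simps(1))
  also have "\<dots> = cnj (omega_exp (\<phi> b)) / (?r * ?r)"
    by (simp add: F_entry_omega_exp if_distrib[of "(*) _"] sum.delta cong: if_cong)
  finally show ?thesis
    by (simp only: of_real_sqrt_card_squared)
qed

lemma black_box_prepared_state:
  assumes "bij \<pi>"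
  shows "black_box \<pi> s prepared_state
           = (\<lambda>(x, y). omega_exp (\<phi> (s * x))
                         * (cnj (omega_exp (\<phi> (inv \<pi> y))) / of_nat CARD('a)))"
  by (simp add: fun_eq_iff black_box_apply[OF assms] prepared_state_eq omega_exp_diff mult_ac)

lemma Fdag_reg1_decodes_phase:
  assumes nonzero: "\<exists>x. \<phi> x \<noteq> 0"
  shows "apply_gate \<phi> Fdag_reg1 (\<lambda>(x, y). omega_exp (\<phi> (s * x)) * f y) (a, b)
           = (if a = s then complex_of_real (sqrt (real CARD('a))) * f b else 0)"
proof -
  let ?r = "complex_of_real (sqrt (real CARD('a)))"
  have "apply_gate \<phi> Fdag_reg1 (\<lambda>(x, y). omega_exp (\<phi> (s * x)) * f y) (a, b)
      = (\<Sum>x\<in>UNIV. f b / ?r * (omega_exp (\<phi> (s * x)) * cnj (omega_exp (\<phi> (a * x)))))"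
    by (simp add: F_entry_omega_exp mult_ac)
  also have "\<dots> = f b / ?r * (\<Sum>x\<in>UNIV. omega_exp (\<phi> ((s - a) * x)))"
    by (simp add: sum_distrib_left left_diff_distrib omega_exp_diff)
  also have "\<dots> = (if a = s then ?r * f b else 0)"
    by (cases "a = s")
      (simp_all add: sum_omega_exp_mult[OF nonzero] flip: of_real_sqrt_card_squared)
  finally show ?thesis .
qed

lemma final_state_eq:
  assumes "\<exists>x. \<phi> x \<noteq> 0" and "bij \<pi>"
  shows "final_state \<pi> s (a, b)
           = (if a = s then cnj (omega_exp (\<phi> (inv \<pi> b))) / complex_of_real (sqrt (real CARD('a)))
              else 0)"
proof -
  let ?r = "complex_of_real (sqrt (real CARD('a)))"
  have "final_state \<pi> s (a, b)
      = apply_gate \<phi> Fdag_reg1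
          (\<lambda>(x, y). omega_exp (\<phi> (s * x)) * (cnj (omega_exp (\<phi> (inv \<pi> y))) / of_nat CARD('a))) (a, b)"
    unfolding black_box_prepared_state[OF assms(2)]
    by (simp add: run_circuit_def del: apply_gate.simps)
  also have "\<dots> = (if a = s then ?r * (cnj (omega_exp (\<phi> (inv \<pi> b))) / of_nat CARD('a)) else 0)"
    by (rule Fdag_reg1_decodes_phase[OF assms(1)])
  also have "\<dots> = (if a = s then cnj (omega_exp (\<phi> (inv \<pi> b))) / ?r else 0)"
    by (simp add: field_simps flip: of_real_mult)
  finally show ?thesis .
qed

lemma measurement_yields_s:
  assumes "\<exists>x. \<phi> x \<noteq> 0" and "bij \<pi>"
  shows "(\<Sum>z\<in>{z. fst z = s}. (cmod (final_state \<pi> s z))\<^sup>2) = 1"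
proof -
  have fiber: "{z. fst z = s} = Pair s ` UNIV"
    by auto
  show ?thesis
    unfolding fiber
    by (simp add: sum.reindex inj_on_def final_state_eq[OF assms] norm_divide power_divide)
qed

end

theorem theorem4:
  fixes \<phi> :: "'a::{finite,field} \<Rightarrow> 'a"
  assumes "gfp_linear_functional \<phi>"
    and "\<exists>x. \<phi> x \<noteq> 0"
  shows "\<exists>init pre post out. solves_HLS_exactly_one_query \<phi> init pre post out"
proof -
  interpret gfp_functional \<phi>
    by (rule gfp_functional.intro) (fact assms(1))
  have "solves_HLS_exactly_one_query \<phi> (0, 1) [F_reg1, Fdag_reg2] [Fdag_reg1] fst"
    unfolding solves_HLS_exactly_one_query_def Let_def
    using measurement_yields_s[OF assms(2)] by (simp add: valid_gate_def)
  then show ?thesis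
    by blast
qed

end
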